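(* Let $\Delta$ be a triangle, $v$ a vertex, and $(\xi_m)_{m\ge0}$ the associated sequence of partitions of the angular interval $I$ at $v$. Let $n\ge0$, $c\ge1$ be integers, let $J$ be an interval of the partition $\xi_n$, and let $S$ be the set of cutting points of $\xi_{n+c}$ lying in the interior of $J$. If $|S|\ge 4+2c$, then there exist three points $x_p,x_q,x_r\in S$ which are in good position.
   Context: Let $\Delta$ be a triangle and $v$ a vertex of $\Delta$. Identify the set of directions (rays) emanating from $v$ into $\Delta$ with an interval $I$ via angular coordinate. A generalized diagonal is a billiard orbit segment from a vertex to a vertex; its length is its number of reflections. A direction $x\in I$ whose billiard trajectory from $v$ is a generalized diagonal (reaches a vertex) is assigned an index, namely the length of that generalized diagonal; we write $x_p$ for such a point of index $p$. The partition $\xi_m$ of $I$ is the partition into subintervals whose cutting points are exactly the directions of index at most $m$ (so $\xi_0$ is essentially the trivial partition, and $\xi_{m+1}$ refines $\xi_m$ with at most one new cutting point inside each interval of $\xi_m$). Three cutting points $x_p,x_q,x_r$ with indices $p<q<r$ are in good position if (1) $x_r$ lies strictly between $x_p$ and $x_q$, and (2) the open interval bounded by $x_p$ and $x_q$ contains no cutting point of index $\le r$ other than $x_r$. *)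

theory Defs
  imports "HOL-Analysis.Analysis"
begin

text \<open>Billiards in a triangle with vertices A, B, C (points of the complex plane).
  The distinguished vertex is A. Directions from A into the triangle are parametrised
  by t in [0,1]: direction towards the point (1-t)B + tC of the opposite side.
  This is an order-preserving reparametrisation of the angular coordinate.\<close>

definition refl_dir :: "complex \<Rightarrow> complex \<Rightarrow> complex" where
  "refl_dir e d = (e / cnj e) * cnj d"   \<comment> \<open>reflection of d in the line spanned by e\<close>

definition exit_time :: "complex \<Rightarrow> complex \<Rightarrow> complex \<Rightarrow> complex \<Rightarrow> complex \<Rightarrow> real" where
  "exit_time A B C P d = Sup {s::real. 0 \<le> s \<and> P + of_real s * d \<in> convex hull {A, B, C}}"

definition side_dir :: "complex \<Rightarrow> complex \<Rightarrow> complex \<Rightarrow> complex \<Rightarrow> complex" where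
  "side_dir A B C Q =
     (if Q \<in> closed_segment A B then B - A
      else if Q \<in> closed_segment B C then C - B else C - A)"

definition bstep :: "complex \<Rightarrow> complex \<Rightarrow> complex \<Rightarrow> complex \<times> complex \<Rightarrow> complex \<times> complex" where
  "bstep A B C = (\<lambda>(P, d). let Q = P + of_real (exit_time A B C P d) * d
                             in (Q, refl_dir (side_dir A B C Q) d))"

text \<open>orbit k = (k-th boundary point, direction after it); orbit 0 = (A, initial direction).\<close>
definition orbit :: "complex \<Rightarrow> complex \<Rightarrow> complex \<Rightarrow> real \<Rightarrow> nat \<Rightarrow> complex \<times> complex" where
  "orbit A B C t k = (bstep A B C ^^ k) (A, (of_real (1 - t) * B + of_real t * C) - A)"

text \<open>Direction t has index p: the trajectory is a generalized diagonal with exactly p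
  reflections (the (p+1)-st boundary point is the first one that is a vertex).\<close>
definition has_index :: "complex \<Rightarrow> complex \<Rightarrow> complex \<Rightarrow> real \<Rightarrow> nat \<Rightarrow> bool" where
  "has_index A B C t p \<longleftrightarrow> t \<in> {0..1} \<and>
     fst (orbit A B C t (Suc p)) \<in> {A, B, C} \<and>
     (\<forall>j<p. fst (orbit A B C t (Suc j)) \<notin> {A, B, C})"

definition cut_pts :: "complex \<Rightarrow> complex \<Rightarrow> complex \<Rightarrow> nat \<Rightarrow> real set" where
  "cut_pts A B C m = {t. \<exists>p\<le>m. has_index A B C t p}"

definition strictly_between :: "real \<Rightarrow> real \<Rightarrow> real \<Rightarrow> bool" where
  "strictly_between x y w \<longleftrightarrow> min x y < w \<and> w < max x y"

definition good_position ::
  "complex \<Rightarrow> complex \<Rightarrow> complex \<Rightarrow> real \<Rightarrow> real \<Rightarrow> real \<Rightarrow> nat \<Rightarrow> nat \<Rightarrow> nat \<Rightarrow> bool" where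
  "good_position A B C xp xq xr p q r \<longleftrightarrow>
     has_index A B C xp p \<and> has_index A B C xq q \<and> has_index A B C xr r \<and>
     p < q \<and> q < r \<and> strictly_between xp xq xr \<and>
     (\<forall>w. strictly_between xp xq w \<and> w \<in> cut_pts A B C r \<longrightarrow> w = xr)"

definition is_interval_of :: "complex \<Rightarrow> complex \<Rightarrow> complex \<Rightarrow> nat \<Rightarrow> real \<Rightarrow> real \<Rightarrow> bool" where
  "is_interval_of A B C n a b \<longleftrightarrow> a < b \<and> a \<in> cut_pts A B C n \<and> b \<in> cut_pts A B C n \<and>
     (\<forall>w. a < w \<and> w < b \<longrightarrow> w \<notin> cut_pts A B C n)"

end

theory Submission
  imports Defs
begin

text \<open>Between two directions x < y of the same index m + 1 there is a cutting point of index at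
  most m. Otherwise no direction in [x, y] has index at most m, and unfolding the triangle along
  the orbits turns all of them into straight rays from v: which side of the next vertex an orbit
  passes is the sign of an affine function of the direction, so by continuity all these orbits
  bounce off the same sides. After m + 1 reflections the orbits of x
  and y would then both reach the same unfolded vertex, which two distinct rays from v cannot do.

  Consequently, inside J the point x of lowest index is unique, and if no three points are in good
  position the indices strictly increase on either side of x: the nearest neighbour z of a point u
  on the far side has the lowest index there, since otherwise the lowest-index point strictly
  between u and z would complete a good triple. As the indices lie in (n, n + c], S has at most
  2c - 1 points.\<close>

section \<open>Barycentric coordinates\<close>

definition cross :: "complex \<Rightarrow> complex \<Rightarrow> real" where
  "cross u v = Re u * Im v - Im u * Re v"

lemma cross_commute: "cross v u = - cross u v"
  by (simp add: cross_def)

lemma cross_cyclic: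
  "cross (Z - Y) (X - Y) = cross (Y - X) (Z - X)" "cross (X - Z) (Y - Z) = cross (Y - X) (Z - X)"
  by (simp_all add: cross_def algebra_simps)

lemma cross_eq_Im_cnj_mult: "cross u v = Im (cnj u * v)"
  by (simp add: cross_def)

lemma collinear_if_cross_eq_0:
  assumes "cross (B - A) (C - A) = 0" shows "collinear {A, B, C}"
proof (cases "B = A")
  case False
  have "cnj (B - A) * (C - A) \<in> \<real>"
    using assms by (simp add: complex_is_Real_iff cross_eq_Im_cnj_mult)
  then have "(C - A) / (B - A) \<in> \<real>"
    unfolding complex_div_cnj[of "C - A"] by (simp add: mult.commute)
  then have "collinear {B, A, C}"
    using False collinear_3[of B A C] collinear_iff_Reals by simp
  then show ?thesis by (simp add: insert_commute)
qed simp

definition bary :: "complex \<Rightarrow> complex \<Rightarrow> complex \<Rightarrow> complex \<Rightarrow> real" where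
  "bary X Y Z z = cross (Y - z) (Z - z) / cross (Y - X) (Z - X)"

lemma bary_sum:
  assumes "cross (Y - X) (Z - X) \<noteq> 0"
  shows "bary X Y Z z + bary Y Z X z + bary Z X Y z = 1"
proof -
  have "cross (Y - z) (Z - z) + cross (Z - z) (X - z) + cross (X - z) (Y - z) = cross (Y - X) (Z - X)"
    by (simp add: cross_def algebra_simps)
  then show ?thesis using assms unfolding bary_def cross_cyclic[where X=X and Y=Y and Z=Z]
    by (simp add: add_divide_distrib[symmetric])
qed

lemma bary_combination:
  assumes "cross (Y - X) (Z - X) \<noteq> 0"
  shows "z = bary X Y Z z *\<^sub>R X + bary Y Z X z *\<^sub>R Y + bary Z X Y z *\<^sub>R Z"
proof -
  define D where "D = cross (Y - X) (Z - X)"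
  have "cross (Y - z) (Z - z) * Re X + cross (Z - z) (X - z) * Re Y + cross (X - z) (Y - z) * Re Z = D * Re z"
       "cross (Y - z) (Z - z) * Im X + cross (Z - z) (X - z) * Im Y + cross (X - z) (Y - z) * Im Z = D * Im z"
    unfolding D_def by (simp_all add: cross_def algebra_simps)
  then show ?thesis
    using assms unfolding bary_def cross_cyclic[where X=X and Y=Y and Z=Z] complex_eq_iff D_def[symmetric]
    by (simp add: add_divide_distrib[symmetric] nonzero_eq_divide_eq)
qed

lemma bary_of_combination:
  assumes D: "cross (Y - X) (Z - X) \<noteq> 0" and "u + v + w = 1" "z = u *\<^sub>R X + v *\<^sub>R Y + w *\<^sub>R Z"
  shows "bary X Y Z z = u" "bary Y Z X z = v" "bary Z X Y z = w"
proof -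
  have coord: "bary X Y Z (u *\<^sub>R X + v *\<^sub>R Y + w *\<^sub>R Z) = u"
    if "cross (Y - X) (Z - X) \<noteq> 0" "u + v + w = 1" for X Y Z :: complex and u v w :: real
  proof -
    have w: "w = 1 - u - v" using that(2) by simp
    have "cross (Y - (u *\<^sub>R X + v *\<^sub>R Y + w *\<^sub>R Z)) (Z - (u *\<^sub>R X + v *\<^sub>R Y + w *\<^sub>R Z))
        = u * cross (Y - X) (Z - X)"
      unfolding w by (simp add: cross_def algebra_simps)
    then show ?thesis using that(1) unfolding bary_def by simp
  qed
  have D': "cross (Z - Y) (X - Y) \<noteq> 0" "cross (X - Z) (Y - Z) \<noteq> 0"
    using D unfolding cross_cyclic[where X=X and Y=Y and Z=Z] by simp_all
  show "bary X Y Z z = u" using coord[OF D assms(2)] assms(3) by simp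
  show "bary Y Z X z = v"
    using coord[where X=Y and Y=Z and Z=X and u=v and v=w and w=u] D'(1) assms(2,3) by (simp add: algebra_simps)
  show "bary Z X Y z = w"
    using coord[where X=Z and Y=X and Z=Y and u=w and v=u and w=v] D'(2) assms(2,3) by (simp add: algebra_simps)
qed

lemma mem_convex_hull_iff_bary:
  assumes D: "cross (Y - X) (Z - X) \<noteq> 0"
  shows "z \<in> convex hull {X, Y, Z} \<longleftrightarrow> 0 \<le> bary X Y Z z \<and> 0 \<le> bary Y Z X z \<and> 0 \<le> bary Z X Y z"
proof
  assume "z \<in> convex hull {X, Y, Z}"
  then obtain u v w where "0 \<le> u" "0 \<le> v" "0 \<le> w" "u + v + w = 1" "z = u *\<^sub>R X + v *\<^sub>R Y + w *\<^sub>R Z"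
    unfolding convex_hull_3 by blast
  then show "0 \<le> bary X Y Z z \<and> 0 \<le> bary Y Z X z \<and> 0 \<le> bary Z X Y z"
    using bary_of_combination[OF D] by simp
next
  assume "0 \<le> bary X Y Z z \<and> 0 \<le> bary Y Z X z \<and> 0 \<le> bary Z X Y z"
  then show "z \<in> convex hull {X, Y, Z}"
    unfolding convex_hull_3 using bary_combination[OF D, of z] bary_sum[OF D, of z] by blast
qed

definition bary_rate :: "complex \<Rightarrow> complex \<Rightarrow> complex \<Rightarrow> complex \<Rightarrow> real" where
  "bary_rate X Y Z d = cross (Z - Y) d / cross (Y - X) (Z - X)"

lemma bary_along_ray: "bary X Y Z (P + of_real s * d) = bary X Y Z P + s * bary_rate X Y Z d"
proof -
  have "cross (Y - (P + of_real s * d)) (Z - (P + of_real s * d)) = cross (Y - P) (Z - P) + s * cross (Z - Y) d"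
    by (simp add: cross_def algebra_simps)
  then show ?thesis unfolding bary_def bary_rate_def by (simp add: add_divide_distrib)
qed

lemma bary_rate_sum: "bary_rate X Y Z d + bary_rate Y Z X d + bary_rate Z X Y d = 0"
proof -
  have "cross (Z - Y) d + cross (X - Z) d + cross (Y - X) d = 0" by (simp add: cross_def algebra_simps)
  then show ?thesis unfolding bary_rate_def cross_cyclic[where X=X and Y=Y and Z=Z]
    by (simp add: add_divide_distrib[symmetric])
qed

lemma bary_rate_swap: "bary_rate X Z Y d = bary_rate X Y Z d"
proof -
  have "cross (Y - Z) d = - cross (Z - Y) d" "cross (Z - X) (Y - X) = - cross (Y - X) (Z - X)"
    by (simp_all add: cross_def algebra_simps)
  then show ?thesis unfolding bary_rate_def by simp
qed

section \<open>Leaving the triangle\<close>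

lemma exit_time_eqI:
  assumes "\<And>s. 0 \<le> s \<and> P + of_real s * d \<in> convex hull {A, B, C} \<longleftrightarrow> 0 \<le> s \<and> s \<le> s0" "0 \<le> s0"
  shows "exit_time A B C P d = s0"
proof -
  have "{s. 0 \<le> s \<and> P + of_real s * d \<in> convex hull {A, B, C}} = {0..s0}"
    by (intro set_eqI) (simp only: mem_Collect_eq atLeastAtMost_iff assms(1))
  then show ?thesis unfolding exit_time_def using assms(2) by simp
qed

text \<open>At time s the ray from a Y + b Z has barycentric coordinates (s mX, a + s mY, b + s mZ);
  it stays in the triangle until its Y-coordinate vanishes.\<close>
lemma first_zero_of_coordinates:
  fixes a b mX mY mZ :: real
  assumes "0 < a" "0 < b" "0 < mX" "mX + mY + mZ = 0" "0 \<le> a * mZ - b * mY"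
  shows "mY < 0" "b + (a / - mY) * mZ = (a * mZ - b * mY) / - mY"
    "0 \<le> s \<and> 0 \<le> s * mX \<and> 0 \<le> a + s * mY \<and> 0 \<le> b + s * mZ \<longleftrightarrow> 0 \<le> s \<and> s \<le> a / - mY"
proof -
  show mY: "mY < 0"
  proof (rule ccontr)
    assume "\<not> mY < 0"
    then have "a * mZ < 0" "0 \<le> b * mY" using assms by (simp_all add: mult_pos_neg)
    then show False using assms(5) by linarith
  qed
  show e: "b + (a / - mY) * mZ = (a * mZ - b * mY) / - mY"
    using mY by (simp add: field_simps)
  have bound: "0 \<le> b + (a / - mY) * mZ" unfolding e using mY assms(5) by (intro divide_nonneg_pos) auto
  show "0 \<le> s \<and> 0 \<le> s * mX \<and> 0 \<le> a + s * mY \<and> 0 \<le> b + s * mZ \<longleftrightarrow> 0 \<le> s \<and> s \<le> a / - mY"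
  proof
    assume "0 \<le> s \<and> 0 \<le> s * mX \<and> 0 \<le> a + s * mY \<and> 0 \<le> b + s * mZ"
    then have "s * - mY \<le> a" by simp
    then show "0 \<le> s \<and> s \<le> a / - mY"
      using mY pos_le_divide_eq[of "- mY" s a] \<open>0 \<le> s \<and> _\<close> by simp
  next
    assume s: "0 \<le> s \<and> s \<le> a / - mY"
    then have "s * - mY \<le> a" using mY pos_le_divide_eq[of "- mY" s a] by simp
    then have "0 \<le> a + s * mY" by simp
    moreover have "0 \<le> b + s * mZ"
    proof (cases "mZ < 0")
      case True
      then have "(a / - mY) * mZ \<le> s * mZ" using s by (intro mult_right_mono_neg) auto
      then show ?thesis using bound by linarith
    qed (use s assms(2) in simp)
    ultimately show "0 \<le> s \<and> 0 \<le> s * mX \<and> 0 \<le> a + s * mY \<and> 0 \<le> b + s * mZ"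
      using s assms(3) by simp
  qed
qed

text \<open>The sign of cross d (X - P), relative to the orientation of XYZ, tells on which side of
  the vertex X the ray passes: here it leaves through the side XZ, or through X itself.\<close>
lemma exit_from_side:
  assumes D: "cross (Y - X) (Z - X) \<noteq> 0" and H: "{X, Y, Z} = {A, B, C}"
    and side: "0 < a" "0 < b" "a + b = 1" "P = a *\<^sub>R Y + b *\<^sub>R Z"
    and inward: "0 < bary_rate X Y Z d"
    and far: "0 \<le> cross d (X - P) / cross (Y - X) (Z - X)"
  shows "0 < exit_time A B C P d" "bary_rate Y Z X d < 0"
    "\<exists>a' b'. 0 < a' \<and> 0 \<le> b' \<and> a' + b' = 1 \<and> P + of_real (exit_time A B C P d) * d = a' *\<^sub>R X + b' *\<^sub>R Z
       \<and> (b' = 0 \<longleftrightarrow> cross d (X - P) = 0)"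
proof -
  define \<delta> where "\<delta> = cross d (X - P) / cross (Y - X) (Z - X)"
  have P0: "P = 0 *\<^sub>R X + a *\<^sub>R Y + b *\<^sub>R Z" using side(4) by simp
  have P: "bary X Y Z P = 0" "bary Y Z X P = a" "bary Z X Y P = b"
    using bary_of_combination[OF D _ P0] side(3) by simp_all
  have b: "b = 1 - a" using side(3) by simp
  have "a * cross (Y - X) d - b * cross (X - Z) d = cross d (X - P)"
    unfolding side(4) b by (simp add: cross_def algebra_simps)
  then have \<delta>_eq: "a * bary_rate Z X Y d - b * bary_rate Y Z X d = \<delta>"
    unfolding bary_rate_def cross_cyclic[where X=X and Y=Y and Z=Z] \<delta>_def
    by (simp add: diff_divide_distrib[symmetric])
  note lp = first_zero_of_coordinates[OF side(1,2) inward bary_rate_sum, unfolded \<delta>_eq, OF far[folded \<delta>_def]]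
  define s where "s = a / - bary_rate Y Z X d"
  show rY: "bary_rate Y Z X d < 0" by (rule lp(1))
  then have s: "0 < s" unfolding s_def using side(1) by (simp add: divide_pos_neg)
  have "exit_time A B C P d = s"
  proof (rule exit_time_eqI)
    show "0 \<le> s' \<and> P + of_real s' * d \<in> convex hull {A, B, C} \<longleftrightarrow> 0 \<le> s' \<and> s' \<le> s" for s'
      unfolding H[symmetric] mem_convex_hull_iff_bary[OF D] bary_along_ray P s_def lp(3)[symmetric]
      by (simp add: add.commute mult.commute)
  qed (use s in simp)
  then show "0 < exit_time A B C P d" using s by simp
  define Q where "Q = P + of_real s * d"
  have QX: "0 < bary X Y Z Q" unfolding Q_def bary_along_ray P using s inward by simp
  have QY: "bary Y Z X Q = 0" unfolding Q_def bary_along_ray P s_def using rY by simp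
  have QZ: "bary Z X Y Q = \<delta> / - bary_rate Y Z X d"
    unfolding Q_def bary_along_ray P using lp(2) s_def by simp
  have "Q = bary X Y Z Q *\<^sub>R X + bary Z X Y Q *\<^sub>R Z" "bary X Y Z Q + bary Z X Y Q = 1"
    using bary_combination[OF D, of Q] bary_sum[OF D, of Q] QY by simp_all
  moreover have "0 \<le> bary Z X Y Q"
    unfolding QZ using far rY by (intro divide_nonneg_pos) (simp_all add: \<delta>_def)
  moreover have "bary Z X Y Q = 0 \<longleftrightarrow> cross d (X - P) = 0"
    unfolding QZ \<delta>_def using rY D by simp
  ultimately show "\<exists>a' b'. 0 < a' \<and> 0 \<le> b' \<and> a' + b' = 1 \<and> P + of_real (exit_time A B C P d) * d = a' *\<^sub>R X + b' *\<^sub>R Z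
       \<and> (b' = 0 \<longleftrightarrow> cross d (X - P) = 0)"
    using QX \<open>exit_time A B C P d = s\<close> unfolding Q_def by blast
qed

section \<open>One bounce off a side\<close>

lemma refl_dir_refl_dir: "e \<noteq> 0 \<Longrightarrow> refl_dir e (refl_dir e d) = d"
  unfolding refl_dir_def by (simp add: field_simps)

lemma refl_dir_diff: "refl_dir e (u - v) = refl_dir e u - refl_dir e v"
  unfolding refl_dir_def by (simp add: algebra_simps)

lemma refl_dir_scale: "refl_dir e (of_real r * u) = of_real r * refl_dir e u"
  unfolding refl_dir_def by (simp add: algebra_simps)

lemma refl_dir_fixes_axis: "e \<noteq> 0 \<Longrightarrow> refl_dir e (of_real r * e) = of_real r * e"
  unfolding refl_dir_def by (simp add: field_simps)

lemma refl_dir_uminus_axis: "refl_dir (- e) = refl_dir e"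
  unfolding refl_dir_def by (cases "e = 0") (simp_all add: field_simps)

lemma cross_refl_dir_axis:
  assumes "e \<noteq> 0" shows "cross e (refl_dir e u) = - cross e u"
proof -
  have "cnj e * (e / cnj e * cnj u) = cnj (cnj e * u)" using assms by simp
  then show ?thesis unfolding cross_eq_Im_cnj_mult refl_dir_def by simp
qed

lemma cross_refl_dir:
  assumes "e \<noteq> 0" shows "cross (refl_dir e u) (refl_dir e v) = - cross u v"
proof -
  have "cnj (e / cnj e * cnj u) * (e / cnj e * cnj v) = cnj (cnj u * v)"
    using assms by (simp add: field_simps)
  then show ?thesis unfolding cross_eq_Im_cnj_mult refl_dir_def by simp
qed

lemma bary_rate_refl_dir:
  assumes "Z \<noteq> Y" shows "bary_rate X Y Z (refl_dir (Z - Y) d) = - bary_rate X Y Z d"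
  using cross_refl_dir_axis[of "Z - Y" d] assms unfolding bary_rate_def by simp

definition vertex_order :: "complex \<Rightarrow> complex \<Rightarrow> complex \<Rightarrow> complex \<Rightarrow> complex \<Rightarrow> complex \<Rightarrow> bool" where
  "vertex_order A B C X Y Z \<longleftrightarrow> (X, Y, Z) \<in> {(A, B, C), (A, C, B), (B, A, C), (B, C, A), (C, A, B), (C, B, A)}"

lemma vertex_order_refl: "vertex_order A B C A B C"
  unfolding vertex_order_def by simp

lemma vertex_order_swap12: "vertex_order A B C X Y Z \<Longrightarrow> vertex_order A B C Y X Z"
  unfolding vertex_order_def by auto

lemma vertex_order_swap23: "vertex_order A B C X Y Z \<Longrightarrow> vertex_order A B C X Z Y"
  unfolding vertex_order_def by auto

lemma vertex_order_set: "vertex_order A B C X Y Z \<Longrightarrow> {X, Y, Z} = {A, B, C}"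
  unfolding vertex_order_def by auto

lemma vertex_order_cross_neq_0:
  assumes "vertex_order A B C X Y Z" "cross (B - A) (C - A) \<noteq> 0"
  shows "cross (Y - X) (Z - X) \<noteq> 0"
proof -
  have "cross (Y - X) (Z - X) = cross (B - A) (C - A) \<or> cross (Y - X) (Z - X) = - cross (B - A) (C - A)"
    using assms(1) unfolding vertex_order_def by (auto simp: cross_def algebra_simps)
  then show ?thesis using assms(2) by auto
qed

lemma open_segment_not_vertex:
  assumes "cross (Y - X) (Z - X) \<noteq> 0" "0 < a" "0 < b" "a + b = 1"
  shows "a *\<^sub>R X + b *\<^sub>R Z \<notin> {X, Y, Z}"
proof -
  have Q0: "a *\<^sub>R X + b *\<^sub>R Z = a *\<^sub>R X + 0 *\<^sub>R Y + b *\<^sub>R Z" by simp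
  have "bary X Y Z (a *\<^sub>R X + b *\<^sub>R Z) = a" "bary Y Z X (a *\<^sub>R X + b *\<^sub>R Z) = 0"
    "bary Z X Y (a *\<^sub>R X + b *\<^sub>R Z) = b"
    using bary_of_combination[OF assms(1) _ Q0] assms(4) by simp_all
  moreover have "bary Z X Y X = 0" "bary Y Z X Y = 1" "bary X Y Z Z = 0"
    using bary_of_combination[OF assms(1), of 1 0 0 X] bary_of_combination[OF assms(1), of 0 1 0 Y]
      bary_of_combination[OF assms(1), of 0 0 1 Z] by simp_all
  ultimately show ?thesis using assms(2,3) by auto
qed

lemma side_dir_AB:
  assumes "0 < a" "0 < b" "a + b = 1"
  shows "side_dir A B C (a *\<^sub>R A + b *\<^sub>R B) = B - A"
proof -
  have "a *\<^sub>R A + b *\<^sub>R B \<in> closed_segment A B"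
    unfolding closed_segment_def using assms by (intro CollectI exI[of _ b]) (simp add: eq_diff_eq)
  then show ?thesis unfolding side_dir_def by simp
qed

lemma side_dir_BC:
  assumes D: "cross (B - A) (C - A) \<noteq> 0" and "0 < a" "0 < b" "a + b = 1"
  shows "side_dir A B C (a *\<^sub>R B + b *\<^sub>R C) = C - B"
proof -
  define Q where "Q = a *\<^sub>R B + b *\<^sub>R C"
  have Q0: "Q = 0 *\<^sub>R A + a *\<^sub>R B + b *\<^sub>R C" unfolding Q_def by simp
  have Qb: "bary C A B Q = b" using bary_of_combination(3)[OF D _ Q0] assms(4) by simp
  have "Q \<notin> closed_segment A B"
  proof
    assume "Q \<in> closed_segment A B"
    then obtain u where Qu: "Q = (1 - u) *\<^sub>R A + u *\<^sub>R B + 0 *\<^sub>R C"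
      unfolding closed_segment_def by auto
    have "bary C A B Q = 0" using bary_of_combination(3)[OF D _ Qu] by simp
    then show False using Qb assms(3) by simp
  qed
  moreover have "Q \<in> closed_segment B C"
    unfolding closed_segment_def Q_def using assms by (intro CollectI exI[of _ b]) (simp add: eq_diff_eq)
  ultimately show ?thesis unfolding side_dir_def Q_def by simp
qed

lemma side_dir_CA:
  assumes D: "cross (B - A) (C - A) \<noteq> 0" and "0 < a" "0 < b" "a + b = 1"
  shows "side_dir A B C (a *\<^sub>R A + b *\<^sub>R C) = C - A"
proof -
  define Q where "Q = a *\<^sub>R A + b *\<^sub>R C"
  have Q0: "Q = a *\<^sub>R A + 0 *\<^sub>R B + b *\<^sub>R C" unfolding Q_def by simp
  have Qab: "bary A B C Q = a" "bary C A B Q = b"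
    using bary_of_combination(1,3)[OF D _ Q0] assms(4) by simp_all
  have "Q \<notin> closed_segment A B"
  proof
    assume "Q \<in> closed_segment A B"
    then obtain u where Qu: "Q = (1 - u) *\<^sub>R A + u *\<^sub>R B + 0 *\<^sub>R C"
      unfolding closed_segment_def by auto
    have "bary C A B Q = 0" using bary_of_combination(3)[OF D _ Qu] by simp
    then show False using Qab assms(3) by simp
  qed
  moreover have "Q \<notin> closed_segment B C"
  proof
    assume "Q \<in> closed_segment B C"
    then obtain u where Qu: "Q = 0 *\<^sub>R A + (1 - u) *\<^sub>R B + u *\<^sub>R C"
      unfolding closed_segment_def by auto
    have "bary A B C Q = 0" using bary_of_combination(1)[OF D _ Qu] by simp
    then show False using Qab assms(2) by simp
  qed
  ultimately show ?thesis unfolding side_dir_def Q_def by simp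
qed

lemma refl_dir_side_dir:
  assumes D: "cross (B - A) (C - A) \<noteq> 0" and "vertex_order A B C X Y Z"
    and ab: "0 < a" "0 < b" "a + b = 1"
  shows "refl_dir (side_dir A B C (a *\<^sub>R X + b *\<^sub>R Z)) = refl_dir (Z - X)"
proof -
  have ba: "b + a = 1" using ab(3) by simp
  consider "(X, Y, Z) = (A, B, C)" | "(X, Y, Z) = (A, C, B)" | "(X, Y, Z) = (B, A, C)"
    | "(X, Y, Z) = (B, C, A)" | "(X, Y, Z) = (C, A, B)" | "(X, Y, Z) = (C, B, A)"
    using assms(2) unfolding vertex_order_def by blast
  then show ?thesis
  proof cases
    case 1 then show ?thesis using side_dir_CA[OF D ab] by simp
  next
    case 2 then show ?thesis using side_dir_AB[OF ab] by simp
  next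
    case 3 then show ?thesis using side_dir_BC[OF D ab] by simp
  next
    case 4 then show ?thesis
      using side_dir_AB[OF ab(2,1) ba] refl_dir_uminus_axis[of "A - B"] by (simp add: add.commute)
  next
    case 5 then show ?thesis
      using side_dir_BC[OF D ab(2,1) ba] refl_dir_uminus_axis[of "C - B"] by (simp add: add.commute)
  next
    case 6 then show ?thesis
      using side_dir_CA[OF D ab(2,1) ba] refl_dir_uminus_axis[of "C - A"] by (simp add: add.commute)
  qed
qed

definition inward_at_side :: "complex \<Rightarrow> complex \<Rightarrow> complex \<Rightarrow> complex \<Rightarrow> complex \<Rightarrow> bool" where
  "inward_at_side X Y Z P d \<longleftrightarrow>
     (\<exists>a b. 0 < a \<and> 0 < b \<and> a + b = 1 \<and> P = a *\<^sub>R Y + b *\<^sub>R Z) \<and> 0 < bary_rate X Y Z d"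

lemma inward_at_side_swap:
  assumes "inward_at_side X Y Z P d" shows "inward_at_side X Z Y P d"
proof -
  obtain a b where "0 < a" "0 < b" "a + b = 1" "P = a *\<^sub>R Y + b *\<^sub>R Z" "0 < bary_rate X Y Z d"
    using assms unfolding inward_at_side_def by blast
  then have "0 < b \<and> 0 < a \<and> b + a = 1 \<and> P = b *\<^sub>R Z + a *\<^sub>R Y" "0 < bary_rate X Z Y d"
    by (simp_all add: bary_rate_swap)
  then show ?thesis unfolding inward_at_side_def by blast
qed

lemma bstep_eq:
  "bstep A B C (P, d) = (P + of_real (exit_time A B C P d) * d,
     refl_dir (side_dir A B C (P + of_real (exit_time A B C P d) * d)) d)"
  unfolding bstep_def by (simp add: Let_def)

context
  fixes A B C X Y Z P d :: complex
  assumes nondeg: "cross (B - A) (C - A) \<noteq> 0"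
    and order: "vertex_order A B C X Y Z"
    and inward: "inward_at_side X Y Z P d"
begin

lemma bstep_to_vertex:
  assumes "cross d (X - P) = 0"
  shows "fst (bstep A B C (P, d)) = X" "0 < exit_time A B C P d"
proof -
  have D: "cross (Y - X) (Z - X) \<noteq> 0" by (rule vertex_order_cross_neq_0[OF order nondeg])
  obtain a b where side: "0 < a" "0 < b" "a + b = 1" "P = a *\<^sub>R Y + b *\<^sub>R Z"
    and rate: "0 < bary_rate X Y Z d"
    using inward unfolding inward_at_side_def by blast
  have "0 \<le> cross d (X - P) / cross (Y - X) (Z - X)" using assms by simp
  note exit = exit_from_side[OF D vertex_order_set[OF order] side rate this]
  obtain a' b' where "a' + b' = 1" "b' = 0"
    "P + of_real (exit_time A B C P d) * d = a' *\<^sub>R X + b' *\<^sub>R Z"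
    using exit(3) assms by blast
  then show "fst (bstep A B C (P, d)) = X" unfolding bstep_eq by simp
  show "0 < exit_time A B C P d" by (rule exit(1))
qed

lemma bstep_through_side:
  assumes "0 < cross d (X - P) / cross (Y - X) (Z - X)"
  defines "Q \<equiv> P + of_real (exit_time A B C P d) * d"
  shows "bstep A B C (P, d) = (Q, refl_dir (Z - X) d)" "0 < exit_time A B C P d"
    "inward_at_side Y X Z Q (refl_dir (Z - X) d)" "refl_dir (Z - X) (Q - X) = Q - X" "Q \<notin> {A, B, C}"
proof -
  have D: "cross (Y - X) (Z - X) \<noteq> 0" by (rule vertex_order_cross_neq_0[OF order nondeg])
  then have ZX: "Z - X \<noteq> 0" by (auto simp: cross_def)
  obtain a b where side: "0 < a" "0 < b" "a + b = 1" "P = a *\<^sub>R Y + b *\<^sub>R Z"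
    and rate: "0 < bary_rate X Y Z d"
    using inward unfolding inward_at_side_def by blast
  note exit = exit_from_side[OF D vertex_order_set[OF order] side rate less_imp_le[OF assms(1)]]
  show "0 < exit_time A B C P d" by (rule exit(1))
  obtain a' b' where a': "0 < a'" "0 \<le> b'" "a' + b' = 1" and Q: "Q = a' *\<^sub>R X + b' *\<^sub>R Z"
    and b'_eq_0: "b' = 0 \<longleftrightarrow> cross d (X - P) = 0"
    using exit(3) unfolding Q_def by blast
  have "cross d (X - P) \<noteq> 0" using assms(1) by (metis divide_eq_0_iff less_irrefl)
  then have ab': "0 < a'" "0 < b'" "a' + b' = 1" using a' b'_eq_0 by simp_all
  show "bstep A B C (P, d) = (Q, refl_dir (Z - X) d)"
    unfolding bstep_eq Q_def[symmetric] Q refl_dir_side_dir[OF nondeg order ab'] ..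
  have "0 < bary_rate Y X Z (refl_dir (Z - X) d)"
    using exit(2) bary_rate_refl_dir[of Z X Y d] ZX by (simp add: bary_rate_swap)
  then show "inward_at_side Y X Z Q (refl_dir (Z - X) d)"
    unfolding inward_at_side_def using ab' Q by blast
  have a'_eq: "a' = 1 - b'" using ab'(3) by simp
  have "Q - X = of_real b' * (Z - X)"
    unfolding Q a'_eq by (simp add: scaleR_conv_of_real algebra_simps)
  then show "refl_dir (Z - X) (Q - X) = Q - X" using refl_dir_fixes_axis[OF ZX] by simp
  show "Q \<notin> {A, B, C}"
    using open_segment_not_vertex[OF D ab'] vertex_order_set[OF order] Q by simp
qed

end

lemma bstep_not_vertex:
  assumes nondeg: "cross (B - A) (C - A) \<noteq> 0" and order: "vertex_order A B C X Y Z"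
    and inward: "inward_at_side X Y Z P d" and "cross d (X - P) \<noteq> 0"
  shows "fst (bstep A B C (P, d)) \<notin> {A, B, C}"
proof -
  have D: "cross (Y - X) (Z - X) \<noteq> 0" by (rule vertex_order_cross_neq_0[OF order nondeg])
  have "cross d (X - P) / cross (Y - X) (Z - X) \<noteq> 0" using assms(4) D by simp
  moreover have "cross d (X - P) / cross (Z - X) (Y - X) = - (cross d (X - P) / cross (Y - X) (Z - X))"
    by (simp add: cross_commute[of "Z - X"])
  ultimately consider "0 < cross d (X - P) / cross (Y - X) (Z - X)" | "0 < cross d (X - P) / cross (Z - X) (Y - X)"
    by linarith
  then show ?thesis
  proof cases
    case 1
    then show ?thesis using bstep_through_side(1,5)[OF nondeg order inward] by simp
  next
    case 2
    then show ?thesis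
      using bstep_through_side(1,5)[OF nondeg vertex_order_swap23[OF order] inward_at_side_swap[OF inward]]
      by simp
  qed
qed

section \<open>Unfolding a family of orbits\<close>

definition init_dir :: "complex \<Rightarrow> complex \<Rightarrow> complex \<Rightarrow> real \<Rightarrow> complex" where
  "init_dir A B C t = (of_real (1 - t) * B + of_real t * C) - A"

lemma orbit_0: "orbit A B C t 0 = (A, init_dir A B C t)"
  unfolding orbit_def init_dir_def by simp

lemma orbit_Suc: "orbit A B C t (Suc k) = bstep A B C (orbit A B C t k)"
  unfolding orbit_def by simp

lemma cross_init_dir: "cross (init_dir A B C t) W = cross (B - A) W + t * cross (C - B) W"
  unfolding init_dir_def by (simp add: cross_def algebra_simps)

lemma cross_init_dir_init_dir:
  "cross (init_dir A B C s) (init_dir A B C t) = (t - s) * cross (B - A) (C - A)"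
  unfolding init_dir_def by (simp add: cross_def algebra_simps)

lemma exit_time_init_dir:
  assumes D: "cross (B - A) (C - A) \<noteq> 0" and "0 \<le> t" "t \<le> 1"
  shows "exit_time A B C A (init_dir A B C t) = 1"
proof (rule exit_time_eqI)
  fix s :: real
  have "A + of_real s * init_dir A B C t = (1 - s) *\<^sub>R A + (s * (1 - t)) *\<^sub>R B + (s * t) *\<^sub>R C"
    unfolding init_dir_def by (simp add: scaleR_conv_of_real algebra_simps)
  moreover have "(1 - s) + s * (1 - t) + s * t = 1" by (simp add: algebra_simps)
  ultimately show "0 \<le> s \<and> A + of_real s * init_dir A B C t \<in> convex hull {A, B, C} \<longleftrightarrow> 0 \<le> s \<and> s \<le> 1"
    unfolding mem_convex_hull_iff_bary[OF D] using bary_of_combination[OF D] assms(2,3) by auto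
qed simp

lemma orbit_1_point:
  assumes "cross (B - A) (C - A) \<noteq> 0" "0 \<le> t" "t \<le> 1"
  shows "fst (orbit A B C t 1) = (1 - t) *\<^sub>R B + t *\<^sub>R C"
  using orbit_Suc[of A B C t 0] exit_time_init_dir[OF assms]
  unfolding orbit_0 bstep_eq by (simp add: init_dir_def scaleR_conv_of_real)

text \<open>The unfolding of the orbits with initial direction in I through their first k bounces:
  g, the composition of the reflections in the sides hit so far (linear part l, orientation
  sign \<kappa>), maps the k-th point of each such orbit onto its initial ray from A, and its k-th
  direction onto the initial direction. After k bounces all of them leave the open side YZ
  heading towards X.\<close>
definition straightens ::
  "complex \<Rightarrow> complex \<Rightarrow> complex \<Rightarrow> real set \<Rightarrow> nat \<Rightarrow> complex \<Rightarrow> complex \<Rightarrow> complex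
     \<Rightarrow> (complex \<Rightarrow> complex) \<Rightarrow> (complex \<Rightarrow> complex) \<Rightarrow> real \<Rightarrow> bool" where
  "straightens A B C I k X Y Z g l \<kappa> \<longleftrightarrow> vertex_order A B C X Y Z \<and>
     (\<forall>z w. g z - g w = l (z - w)) \<and> (\<forall>r u. l (of_real r * u) = of_real r * l u) \<and>
     (\<forall>u v. cross (l u) (l v) = \<kappa> * cross u v) \<and> \<kappa> \<noteq> 0 \<and>
     (\<forall>t\<in>I. case orbit A B C t k of (P, d) \<Rightarrow>
        inward_at_side X Y Z P d \<and> l d = init_dir A B C t \<and> (\<exists>L>0. g P = A + of_real L * init_dir A B C t))"

lemma straightensD:
  assumes "straightens A B C I k X Y Z g l \<kappa>" "t \<in> I" "orbit A B C t k = (P, d)"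
  shows "vertex_order A B C X Y Z" "g z - g w = l (z - w)" "l (of_real r * u) = of_real r * l u"
    "cross (l u) (l v) = \<kappa> * cross u v" "\<kappa> \<noteq> 0"
    "inward_at_side X Y Z P d" "l d = init_dir A B C t" "\<exists>L>0. g P = A + of_real L * init_dir A B C t"
  using assms unfolding straightens_def by (auto split: prod.splits)

lemma straightens_along_ray:
  assumes "straightens A B C I k X Y Z g l \<kappa>" "t \<in> I" "orbit A B C t k = (P, d)"
  obtains L where "0 < L" "g (P + of_real s * d) = A + of_real (L + s) * init_dir A B C t"
proof -
  obtain L where "0 < L" "g P = A + of_real L * init_dir A B C t"
    using straightensD(8)[OF assms] by blast
  moreover have "g (P + of_real s * d) = g P + of_real s * l d"
    using straightensD(2,3)[OF assms] by (metis add_diff_cancel_left' diff_add_cancel)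
  ultimately show thesis using that straightensD(7)[OF assms] by (simp add: algebra_simps)
qed

lemma straightens_1:
  assumes D: "cross (B - A) (C - A) \<noteq> 0" and I: "I \<subseteq> {0<..<1}"
  shows "straightens A B C I 1 A B C (\<lambda>z. B + refl_dir (C - B) (z - B)) (refl_dir (C - B)) (- 1)"
  unfolding straightens_def
proof (intro conjI allI ballI)
  have CB: "C - B \<noteq> 0" using D by (auto simp: cross_def)
  show "vertex_order A B C A B C" by (rule vertex_order_refl)
  show "B + refl_dir (C - B) (z - B) - (B + refl_dir (C - B) (w - B)) = refl_dir (C - B) (z - w)" for z w
    by (simp add: refl_dir_diff)
  show "refl_dir (C - B) (of_real r * u) = of_real r * refl_dir (C - B) u" for r u
    by (rule refl_dir_scale)
  show "cross (refl_dir (C - B) u) (refl_dir (C - B) v) = - 1 * cross u v" for u v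
    using cross_refl_dir[OF CB] by simp
  show "(- 1 :: real) \<noteq> 0" by simp
  fix t assume "t \<in> I"
  then have t: "0 < t" "t < 1" using I by auto
  define Q where "Q = (1 - t) *\<^sub>R B + t *\<^sub>R C"
  have Q: "A + init_dir A B C t = Q"
    unfolding Q_def init_dir_def by (simp add: scaleR_conv_of_real)
  have "exit_time A B C A (init_dir A B C t) = 1" using exit_time_init_dir[OF D] t by simp
  then have "orbit A B C t 1 = (Q, refl_dir (C - B) (init_dir A B C t))"
    using orbit_Suc[of A B C t 0] side_dir_BC[OF D, of "1 - t" t] t
    unfolding orbit_0 bstep_eq Q_def[symmetric] by (simp add: Q)
  moreover have "inward_at_side A B C Q (refl_dir (C - B) (init_dir A B C t))"
  proof -
    have "bary A B C A = 1" "bary A B C Q = 0"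
      using bary_of_combination(1)[OF D, of 1 0 0 A] bary_of_combination(1)[OF D, of 0 "1 - t" t Q]
      unfolding Q_def by simp_all
    then have "bary_rate A B C (init_dir A B C t) = - 1"
      using bary_along_ray[of A B C A 1 "init_dir A B C t"] Q by simp
    then have "0 < bary_rate A B C (refl_dir (C - B) (init_dir A B C t))"
      using bary_rate_refl_dir[of C B A "init_dir A B C t"] CB by simp
    moreover have "0 < 1 - t \<and> 0 < t \<and> (1 - t) + t = 1 \<and> Q = (1 - t) *\<^sub>R B + t *\<^sub>R C"
      using t unfolding Q_def by simp
    ultimately show ?thesis unfolding inward_at_side_def by blast
  qed
  moreover have "B + refl_dir (C - B) (Q - B) = A + init_dir A B C t"
  proof -
    have "Q - B = of_real t * (C - B)" unfolding Q_def by (simp add: scaleR_conv_of_real algebra_simps)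
    then show ?thesis unfolding Q using refl_dir_fixes_axis[OF CB, of t] by (metis add.commute diff_add_cancel)
  qed
  ultimately show "case orbit A B C t 1 of (P, d) \<Rightarrow>
      inward_at_side A B C P d \<and> refl_dir (C - B) d = init_dir A B C t \<and>
      (\<exists>L>0. B + refl_dir (C - B) (P - B) = A + of_real L * init_dir A B C t)"
    using refl_dir_refl_dir[OF CB] by (auto intro!: exI[of _ 1])
qed

lemma straightens_swap:
  assumes "straightens A B C I k X Y Z g l \<kappa>" shows "straightens A B C I k X Z Y g l \<kappa>"
  using assms vertex_order_swap23 inward_at_side_swap unfolding straightens_def
  by (fastforce split: prod.splits)

lemma straightens_Suc_through_side:
  assumes D0: "cross (B - A) (C - A) \<noteq> 0" and st: "straightens A B C I k X Y Z g l \<kappa>"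
    and far: "\<And>t. t \<in> I \<Longrightarrow> case orbit A B C t k of (P, d) \<Rightarrow> 0 < cross d (X - P) / cross (Y - X) (Z - X)"
  shows "straightens A B C I (Suc k) Y X Z (\<lambda>z. g (X + refl_dir (Z - X) (z - X)))
           (\<lambda>u. l (refl_dir (Z - X) u)) (- \<kappa>)"
  unfolding straightens_def
proof (intro conjI allI ballI)
  show "vertex_order A B C Y X Z"
    using st vertex_order_swap12 unfolding straightens_def by blast
  have order: "vertex_order A B C X Y Z" and affine: "\<And>z w. g z - g w = l (z - w)"
    and linear: "\<And>r u. l (of_real r * u) = of_real r * l u"
    and orient: "\<And>u v. cross (l u) (l v) = \<kappa> * cross u v" and "\<kappa> \<noteq> 0"
    using st unfolding straightens_def by auto
  have ZX: "Z - X \<noteq> 0"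
    using vertex_order_cross_neq_0[OF order D0] by (auto simp: cross_def)
  show "g (X + refl_dir (Z - X) (z - X)) - g (X + refl_dir (Z - X) (w - X)) = l (refl_dir (Z - X) (z - w))"
    for z w using affine by (simp add: refl_dir_diff)
  show "l (refl_dir (Z - X) (of_real r * u)) = of_real r * l (refl_dir (Z - X) u)" for r u
    using linear by (simp add: refl_dir_scale)
  show "cross (l (refl_dir (Z - X) u)) (l (refl_dir (Z - X) v)) = - \<kappa> * cross u v" for u v
    using orient cross_refl_dir[OF ZX] by simp
  show "- \<kappa> \<noteq> 0" using \<open>\<kappa> \<noteq> 0\<close> by simp
  fix t assume t: "t \<in> I"
  obtain P d where Pd: "orbit A B C t k = (P, d)" by fastforce
  define Q where "Q = P + of_real (exit_time A B C P d) * d"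
  have "0 < cross d (X - P) / cross (Y - X) (Z - X)" using far[OF t] unfolding Pd by simp
  note step = bstep_through_side[OF D0 order straightensD(6)[OF st t Pd] this, folded Q_def]
  obtain L where "0 < L" and gQ: "g Q = A + of_real (L + exit_time A B C P d) * init_dir A B C t"
    using straightens_along_ray[OF st t Pd] unfolding Q_def by blast
  have "orbit A B C t (Suc k) = (Q, refl_dir (Z - X) d)"
    unfolding orbit_Suc Pd step(1) ..
  moreover have "l (refl_dir (Z - X) (refl_dir (Z - X) d)) = init_dir A B C t"
    using straightensD(7)[OF st t Pd] refl_dir_refl_dir[OF ZX] by simp
  moreover have "g (X + refl_dir (Z - X) (Q - X)) = A + of_real (L + exit_time A B C P d) * init_dir A B C t"
    using step(4) gQ by simp
  moreover have "0 < L + exit_time A B C P d" using \<open>0 < L\<close> step(2) by simp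
  ultimately show "case orbit A B C t (Suc k) of (P, d) \<Rightarrow>
      inward_at_side Y X Z P d \<and> l (refl_dir (Z - X) d) = init_dir A B C t \<and>
      (\<exists>L>0. g (X + refl_dir (Z - X) (P - X)) = A + of_real L * init_dir A B C t)"
    using step(3) by auto
qed

lemma straightens_cross_init_dir:
  assumes st: "straightens A B C I k X Y Z g l \<kappa>" and t: "t \<in> I" and Pd: "orbit A B C t k = (P, d)"
  shows "cross (init_dir A B C t) (g X - A) = \<kappa> * cross d (X - P)"
proof -
  obtain L where gP: "g P = A + of_real L * init_dir A B C t"
    using straightensD(8)[OF st t Pd] by blast
  have "g X - A = l (X - P) + of_real L * init_dir A B C t"
    using straightensD(2)[OF st t Pd, of X P] gP by (simp add: algebra_simps)
  then have "cross (init_dir A B C t) (g X - A) = cross (l d) (l (X - P))"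
    unfolding straightensD(7)[OF st t Pd] by (simp add: cross_def algebra_simps)
  then show ?thesis using straightensD(4)[OF st t Pd] by simp
qed

lemma straightens_vertex_hit:
  assumes D0: "cross (B - A) (C - A) \<noteq> 0" and st: "straightens A B C I k X Y Z g l \<kappa>" and t: "t \<in> I"
    and hit: "fst (orbit A B C t (Suc k)) \<in> {A, B, C}"
  shows "\<exists>L>0. g X = A + of_real L * init_dir A B C t"
proof -
  obtain P d where Pd: "orbit A B C t k = (P, d)" by fastforce
  note order = straightensD(1)[OF st t Pd] and inward = straightensD(6)[OF st t Pd]
  have hit': "fst (bstep A B C (P, d)) \<in> {A, B, C}" using hit unfolding orbit_Suc Pd .
  then have "cross d (X - P) = 0" using bstep_not_vertex[OF D0 order inward] by blast
  note vertex = bstep_to_vertex[OF D0 order inward this]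
  obtain L where "0 < L" and "g (P + of_real (exit_time A B C P d) * d) = A + of_real (L + exit_time A B C P d) * init_dir A B C t"
    using straightens_along_ray[OF st t Pd] by blast
  moreover have "P + of_real (exit_time A B C P d) * d = X" using vertex(1) unfolding bstep_eq by simp
  ultimately show ?thesis using vertex(2) by (intro exI[of _ "L + exit_time A B C P d"]) simp
qed

lemma continuous_on_nonzero_sign:
  fixes f :: "real \<Rightarrow> real"
  assumes "connected S" "continuous_on S f" "\<And>t. t \<in> S \<Longrightarrow> f t \<noteq> 0"
  shows "(\<forall>t\<in>S. 0 < f t) \<or> (\<forall>t\<in>S. f t < 0)"
proof (rule ccontr)
  assume "\<not> ?thesis"
  then obtain u v where "u \<in> S" "v \<in> S" "f u < 0" "0 < f v"
    using assms(3) by (metis linorder_neqE_linordered_idom)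
  moreover have "connected (f ` S)" using connected_continuous_image[OF assms(2,1)] .
  ultimately have "0 \<in> f ` S" by (intro connectedD_interval[of "f ` S" "f u" "f v" 0]) auto
  then show False using assms(3) by auto
qed

text \<open>The orbit of direction t passes X on the side given by the sign of the affine function
  cross (init_dir t) (g X - A); without vertex hits this sign is constant on the interval.\<close>
lemma straightens_Suc:
  assumes D0: "cross (B - A) (C - A) \<noteq> 0" and st: "straightens A B C {t1..t2} k X Y Z g l \<kappa>"
    and no_hit: "\<And>t. t \<in> {t1..t2} \<Longrightarrow> fst (orbit A B C t (Suc k)) \<notin> {A, B, C}"
  obtains X' Y' Z' g' l' \<kappa>' where "straightens A B C {t1..t2} (Suc k) X' Y' Z' g' l' \<kappa>'"
proof -
  have order: "vertex_order A B C X Y Z" and "\<kappa> \<noteq> 0"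
    using st unfolding straightens_def by auto
  define \<sigma> where "\<sigma> = \<kappa> * cross (Y - X) (Z - X)"
  have "\<sigma> \<noteq> 0" unfolding \<sigma>_def using \<open>\<kappa> \<noteq> 0\<close> vertex_order_cross_neq_0[OF order D0] by simp
  define F where "F t = cross (init_dir A B C t) (g X - A) / \<sigma>" for t
  have F: "F t = cross d (X - P) / cross (Y - X) (Z - X)"
    if "t \<in> {t1..t2}" "orbit A B C t k = (P, d)" for t P d
    using straightens_cross_init_dir[OF st that] \<open>\<kappa> \<noteq> 0\<close> unfolding F_def \<sigma>_def by simp
  have "F t \<noteq> 0" if t: "t \<in> {t1..t2}" for t
  proof
    assume "F t = 0"
    obtain P d where Pd: "orbit A B C t k = (P, d)" by fastforce
    have "cross d (X - P) = 0" using F[OF t Pd] \<open>F t = 0\<close> vertex_order_cross_neq_0[OF order D0] by simp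
    then have "fst (orbit A B C t (Suc k)) = X"
      unfolding orbit_Suc Pd by (rule bstep_to_vertex(1)[OF D0 order straightensD(6)[OF st t Pd]])
    then show False using no_hit[OF t] vertex_order_set[OF order] by auto
  qed
  moreover have "continuous_on {t1..t2} F"
    unfolding F_def cross_init_dir using \<open>\<sigma> \<noteq> 0\<close> by (intro continuous_intros) auto
  ultimately consider "\<forall>t\<in>{t1..t2}. 0 < F t" | "\<forall>t\<in>{t1..t2}. F t < 0"
    using continuous_on_nonzero_sign[of "{t1..t2}" F] by auto
  then show thesis
  proof cases
    case 1
    have "case orbit A B C t k of (P, d) \<Rightarrow> 0 < cross d (X - P) / cross (Y - X) (Z - X)"
      if t: "t \<in> {t1..t2}" for t
    proof -
      obtain P d where Pd: "orbit A B C t k = (P, d)" by fastforce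
      have "0 < F t" using 1 t by blast
      then show ?thesis using F[OF t Pd] unfolding Pd by simp
    qed
    then show thesis using straightens_Suc_through_side[OF D0 st] that by blast
  next
    case 2
    have "case orbit A B C t k of (P, d) \<Rightarrow> 0 < cross d (X - P) / cross (Z - X) (Y - X)"
      if t: "t \<in> {t1..t2}" for t
    proof -
      obtain P d where Pd: "orbit A B C t k = (P, d)" by fastforce
      have "cross (Z - X) (Y - X) = - cross (Y - X) (Z - X)" by (rule cross_commute)
      moreover have "F t < 0" using 2 t by blast
      ultimately show ?thesis using F[OF t Pd] unfolding Pd by (simp add: neg_divide_less_eq)
    qed
    then show thesis using straightens_Suc_through_side[OF D0 straightens_swap[OF st]] that by blast
  qed
qed

lemma straightens_unique_vertex_hit:
  assumes D0: "cross (B - A) (C - A) \<noteq> 0" and st: "straightens A B C I k X Y Z g l \<kappa>"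
    and "s \<in> I" "t \<in> I"
    and "fst (orbit A B C s (Suc k)) \<in> {A, B, C}" "fst (orbit A B C t (Suc k)) \<in> {A, B, C}"
  shows "s = t"
proof -
  obtain L where "0 < L" and gs: "g X = A + of_real L * init_dir A B C s"
    using straightens_vertex_hit[OF D0 st assms(3,5)] by blast
  obtain M where gt: "g X = A + of_real M * init_dir A B C t"
    using straightens_vertex_hit[OF D0 st assms(4,6)] by blast
  have "L * cross (init_dir A B C s) (init_dir A B C t) = cross (of_real L * init_dir A B C s) (init_dir A B C t)"
    by (simp add: cross_def algebra_simps)
  also have "\<dots> = cross (of_real M * init_dir A B C t) (init_dir A B C t)"
    using gs gt by simp
  also have "\<dots> = 0" by (simp add: cross_def)
  finally show ?thesis using \<open>0 < L\<close> D0 unfolding cross_init_dir_init_dir by simp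
qed

section \<open>Directions of equal index\<close>

lemma has_index_if_hits_vertex:
  assumes "u \<in> {0..1}" "fst (orbit A B C u (Suc j)) \<in> {A, B, C}"
  shows "\<exists>p\<le>j. has_index A B C u p"
proof -
  define hit where "hit i \<longleftrightarrow> fst (orbit A B C u (Suc i)) \<in> {A, B, C}" for i
  define p where "p = (LEAST i. hit i)"
  have "hit j" using assms(2) unfolding hit_def .
  then have "hit p" "p \<le> j" unfolding p_def by (rule LeastI, rule Least_le)
  moreover have "\<not> hit i" if "i < p" for i using not_less_Least that unfolding p_def .
  ultimately show ?thesis using assms(1) unfolding has_index_def hit_def by auto
qed

lemma straightens_while_no_vertex:
  assumes D0: "cross (B - A) (C - A) \<noteq> 0" and I: "{s..t} \<subseteq> {0<..<1}"
    and no_hit: "\<And>u j. u \<in> {s..t} \<Longrightarrow> j \<le> m \<Longrightarrow> fst (orbit A B C u (Suc j)) \<notin> {A, B, C}"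
  shows "\<exists>X Y Z g l \<kappa>. straightens A B C {s..t} (Suc m) X Y Z g l \<kappa>"
proof -
  have "\<exists>X Y Z g l \<kappa>. straightens A B C {s..t} (Suc j) X Y Z g l \<kappa>" if "j \<le> m" for j
    using that
  proof (induction j)
    case 0
    show ?case using straightens_1[OF D0 I] by (metis One_nat_def)
  next
    case (Suc j)
    then obtain X Y Z g l \<kappa> where "straightens A B C {s..t} (Suc j) X Y Z g l \<kappa>" by auto
    then obtain X' Y' Z' g' l' \<kappa>' where "straightens A B C {s..t} (Suc (Suc j)) X' Y' Z' g' l' \<kappa>'"
      by (rule straightens_Suc[OF D0]) (use no_hit Suc.prems in auto)
    then show ?case by blast
  qed
  then show ?thesis by blast
qed

lemma equal_index_separated:
  assumes D0: "cross (B - A) (C - A) \<noteq> 0" and "s < t"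
    and s: "has_index A B C s (Suc m)" and t: "has_index A B C t (Suc m)"
  shows "\<exists>w. s < w \<and> w < t \<and> w \<in> cut_pts A B C m"
proof (rule ccontr)
  assume no_cut: "\<not> ?thesis"
  have no_hit: "fst (orbit A B C u (Suc j)) \<notin> {A, B, C}" if u: "u \<in> {s..t}" and "j \<le> m" for u j
  proof
    assume hit: "fst (orbit A B C u (Suc j)) \<in> {A, B, C}"
    then have "u \<noteq> s" "u \<noteq> t" using s t \<open>j \<le> m\<close> unfolding has_index_def by auto
    moreover have "u \<in> {0..1}" using u s t unfolding has_index_def by auto
    then obtain p where "p \<le> j" "has_index A B C u p" using has_index_if_hits_vertex hit by blast
    then have "u \<in> cut_pts A B C m" using \<open>j \<le> m\<close> unfolding cut_pts_def by (blast intro: le_trans)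
    ultimately show False using no_cut u by auto
  qed
  have "s \<noteq> 0" "t \<noteq> 1"
    using orbit_1_point[OF D0, of 0] orbit_1_point[OF D0, of 1] no_hit[of s 0] no_hit[of t 0] \<open>s < t\<close>
    by auto
  then have "{s..t} \<subseteq> {0<..<1}" using s t unfolding has_index_def by auto
  then obtain X Y Z g l \<kappa> where "straightens A B C {s..t} (Suc m) X Y Z g l \<kappa>"
    using straightens_while_no_vertex[OF D0 _ no_hit] by blast
  from straightens_unique_vertex_hit[OF D0 this, of s t] s t \<open>s < t\<close> show False
    unfolding has_index_def by auto
qed

section \<open>Levels along a line\<close>

definition lower_level_between :: "real set \<Rightarrow> (real \<Rightarrow> nat) \<Rightarrow> bool" where
  "lower_level_between S lev \<longleftrightarrow>
     (\<forall>x\<in>S. \<forall>y\<in>S. x \<noteq> y \<and> lev x = lev y \<longrightarrow> (\<exists>w\<in>S. strictly_between x y w \<and> lev w < lev x))"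

definition good_triple :: "real set \<Rightarrow> (real \<Rightarrow> nat) \<Rightarrow> real \<Rightarrow> real \<Rightarrow> real \<Rightarrow> bool" where
  "good_triple S lev u z w \<longleftrightarrow> u \<in> S \<and> z \<in> S \<and> w \<in> S \<and> lev u < lev z \<and> lev z < lev w \<and>
     strictly_between u z w \<and> (\<forall>w'\<in>S. strictly_between u z w' \<and> lev w' \<le> lev w \<longrightarrow> w' = w)"

lemma strictly_between_uminus: "strictly_between (- x) (- y) (- w) \<longleftrightarrow> strictly_between x y w"
  unfolding strictly_between_def by linarith

lemma lower_level_between_uminus:
  assumes "lower_level_between S lev"
  shows "lower_level_between (uminus ` S) (lev \<circ> uminus)"
  unfolding lower_level_between_def
proof (intro ballI impI)
  fix x y assume "x \<in> uminus ` S" "y \<in> uminus ` S" "x \<noteq> y \<and> (lev \<circ> uminus) x = (lev \<circ> uminus) y"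
  then obtain w where "w \<in> S" "strictly_between (- x) (- y) w" "lev w < lev (- x)"
    using assms unfolding lower_level_between_def by fastforce
  then show "\<exists>w\<in>uminus ` S. strictly_between x y w \<and> (lev \<circ> uminus) w < (lev \<circ> uminus) x"
    by (intro bexI[of _ "- w"]) (auto simp: strictly_between_uminus[of x y "- w", symmetric])
qed

lemma good_triple_uminus:
  assumes "good_triple (uminus ` S) (lev \<circ> uminus) u z w"
  shows "good_triple S lev (- u) (- z) (- w)"
proof -
  have "w' = - w" if "w' \<in> S" "strictly_between (- u) (- z) w'" "lev w' \<le> lev (- w)" for w'
  proof -
    have "strictly_between u z (- w')" using that(2) strictly_between_uminus[of u z "- w'"] by simp
    then have "- w' = w" using assms that(1,3) unfolding good_triple_def by auto
    then show ?thesis by simp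
  qed
  with assms show ?thesis
    unfolding good_triple_def by (auto simp: strictly_between_uminus)
qed

lemma unique_min_level:
  assumes "z0 \<in> T" "T \<subseteq> S" "lower_level_between S lev"
    and convex: "\<And>x y w. x \<in> T \<Longrightarrow> y \<in> T \<Longrightarrow> w \<in> S \<Longrightarrow> strictly_between x y w \<Longrightarrow> w \<in> T"
  obtains z where "z \<in> T" "\<And>y. y \<in> T \<Longrightarrow> y \<noteq> z \<Longrightarrow> lev z < lev y"
proof -
  obtain z where z: "z \<in> T" and zmin: "\<And>y. y \<in> T \<Longrightarrow> lev z \<le> lev y"
    using ex_has_least_nat[of "\<lambda>x. x \<in> T", OF assms(1), of lev] by auto
  have "lev z < lev y" if y: "y \<in> T" "y \<noteq> z" for y
  proof (rule ccontr)
    assume "\<not> lev z < lev y"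
    then have eq: "lev y = lev z" using zmin[OF y(1)] by simp
    have "y \<in> S" "z \<in> S" using y(1) z assms(2) by auto
    then obtain w where w: "w \<in> S" "strictly_between y z w" "lev w < lev y"
      using assms(3) y(2) eq unfolding lower_level_between_def by blast
    have "w \<in> T" using convex[OF y(1) z w(1,2)] .
    then show False using zmin w(3) eq by fastforce
  qed
  then show thesis using that z by blast
qed

lemma inj_on_level_right:
  assumes "finite S" "lower_level_between S lev" "\<nexists>u z w. good_triple S lev u z w"
    and "u \<in> S" "\<And>t. t \<in> S \<Longrightarrow> u < t \<Longrightarrow> lev u < lev t"
  shows "inj_on lev (S \<inter> {u<..})"
  using assms(4,5)
proof (induction "card (S \<inter> {u<..})" arbitrary: u rule: less_induct)
  case less
  show ?case
  proof (cases "S \<inter> {u<..} = {}")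
    case True
    then show ?thesis by simp
  next
    case False
    then obtain z0 where "z0 \<in> S \<inter> {u<..}" by blast
    then obtain z where "z \<in> S \<inter> {u<..}" and zmin': "\<And>y. y \<in> S \<inter> {u<..} \<Longrightarrow> y \<noteq> z \<Longrightarrow> lev z < lev y"
      by (rule unique_min_level[OF _ _ assms(2)]) (auto simp: strictly_between_def)
    then have z: "z \<in> S" "u < z" and zmin: "\<And>y. y \<in> S \<Longrightarrow> u < y \<Longrightarrow> y \<noteq> z \<Longrightarrow> lev z < lev y"
      by auto
    have no_gap: False if "w0 \<in> S" "u < w0" "w0 < z" for w0
    proof -
      have "w0 \<in> S \<inter> {u<..<z}" using that by simp
      then obtain w where "w \<in> S \<inter> {u<..<z}"
        and wmin': "\<And>y. y \<in> S \<inter> {u<..<z} \<Longrightarrow> y \<noteq> w \<Longrightarrow> lev w < lev y"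
        by (rule unique_min_level[OF _ _ assms(2)]) (auto simp: strictly_between_def)
      then have w: "w \<in> S" "u < w" "w < z"
        and wmin: "\<And>y. y \<in> S \<Longrightarrow> u < y \<Longrightarrow> y < z \<Longrightarrow> y \<noteq> w \<Longrightarrow> lev w < lev y"
        by auto
      have "good_triple S lev u z w"
        unfolding good_triple_def strictly_between_def
        using less.prems z w zmin[of w] wmin by fastforce
      then show False using assms(3) by blast
    qed
    have R: "S \<inter> {u<..} = insert z (S \<inter> {z<..})"
      using z no_gap by fastforce
    have "inj_on lev (S \<inter> {z<..})"
    proof (rule less.hyps)
      show "card (S \<inter> {z<..}) < card (S \<inter> {u<..})"
        unfolding R using assms(1) by (simp add: card_insert_if)
    qed (use z zmin in auto)
    moreover have "lev z \<notin> lev ` (S \<inter> {z<..})" using zmin z by fastforce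
    ultimately show ?thesis unfolding R by simp
  qed
qed

lemma card_lt_if_no_good_triple:
  assumes "finite S" "S \<noteq> {}" "lower_level_between S lev" "\<nexists>u z w. good_triple S lev u z w"
  shows "card S < 2 * card (lev ` S)"
proof -
  obtain x0 where "x0 \<in> S" using assms(2) by blast
  then obtain x where x: "x \<in> S" and xmin: "\<And>y. y \<in> S \<Longrightarrow> y \<noteq> x \<Longrightarrow> lev x < lev y"
    by (rule unique_min_level[OF _ order_refl assms(3)]) auto
  have right: "inj_on lev (S \<inter> {x<..})"
    using inj_on_level_right[OF assms(1,3,4) x] xmin by auto
  have "inj_on (lev \<circ> uminus) (uminus ` S \<inter> {- x<..})"
  proof (rule inj_on_level_right)
    show "\<nexists>u z w. good_triple (uminus ` S) (lev \<circ> uminus) u z w"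
      using good_triple_uminus assms(4) by blast
    show "lower_level_between (uminus ` S) (lev \<circ> uminus)"
      using lower_level_between_uminus[OF assms(3)] .
    show "(lev \<circ> uminus) (- x) < (lev \<circ> uminus) t" if "t \<in> uminus ` S" "- x < t" for t
      using that xmin by auto
  qed (use assms(1) x in simp_all)
  moreover have "uminus ` (uminus ` S \<inter> {- x<..}) = S \<inter> {..<x}"
    by (simp add: image_Int image_image)
  ultimately have left: "inj_on lev (S \<inter> {..<x})"
    using inj_on_imageI by metis
  have "lev ` (S \<inter> {x<..}) \<subseteq> lev ` S - {lev x}" "lev ` (S \<inter> {..<x}) \<subseteq> lev ` S - {lev x}"
    using xmin by (auto, metis less_irrefl)+
  then have "card (S \<inter> {x<..}) \<le> card (lev ` S) - 1" "card (S \<inter> {..<x}) \<le> card (lev ` S) - 1"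
    using card_mono[of "lev ` S - {lev x}"] assms(1) x
    unfolding card_image[OF right, symmetric] card_image[OF left, symmetric] by auto
  moreover have "card S \<le> Suc (card (S \<inter> {x<..}) + card (S \<inter> {..<x}))"
  proof -
    have "S = insert x ((S \<inter> {x<..}) \<union> (S \<inter> {..<x}))" using x by auto
    then have "card S \<le> Suc (card ((S \<inter> {x<..}) \<union> (S \<inter> {..<x})))"
      by (metis card_insert_le_m1 le_SucI card_insert_if assms(1) finite_Un finite_Int le_refl)
    then show ?thesis using card_Un_le[of "S \<inter> {x<..}" "S \<inter> {..<x}"] by linarith
  qed
  moreover have "card (lev ` S) \<ge> 1" using assms(1,2) by (simp add: Suc_leI card_gt_0_iff)
  ultimately show ?thesis by linarith
qed

section \<open>Cutting points inside an interval of the partition\<close>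

definition diag_index :: "complex \<Rightarrow> complex \<Rightarrow> complex \<Rightarrow> real \<Rightarrow> nat" where
  "diag_index A B C t = (LEAST p. has_index A B C t p)"

lemma has_index_unique: "has_index A B C t p \<Longrightarrow> has_index A B C t q \<Longrightarrow> p = q"
  unfolding has_index_def by (metis linorder_neqE_nat)

lemma diag_index_eq: "has_index A B C t p \<Longrightarrow> diag_index A B C t = p"
  unfolding diag_index_def by (rule Least_equality) (auto dest: has_index_unique)

context
  fixes A B C :: complex and n c :: nat and a b :: real and S :: "real set"
  assumes interval: "is_interval_of A B C n a b"
    and S_def: "S = cut_pts A B C (n + c) \<inter> {a<..<b}"
begin

lemma mem_S_iff: "t \<in> S \<longleftrightarrow> a < t \<and> t < b \<and> has_index A B C t (diag_index A B C t) \<and> diag_index A B C t \<le> n + c"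
  unfolding S_def cut_pts_def using diag_index_eq by auto

lemma diag_index_in_window:
  assumes "t \<in> S" shows "n < diag_index A B C t"
proof (rule ccontr)
  assume "\<not> n < diag_index A B C t"
  moreover have "has_index A B C t (diag_index A B C t)" using assms mem_S_iff by blast
  ultimately have "t \<in> cut_pts A B C n" unfolding cut_pts_def by (blast intro: not_less[THEN iffD1])
  then show False using assms interval mem_S_iff unfolding is_interval_of_def by auto
qed

lemma cut_pts_lower_level_between:
  assumes D0: "cross (B - A) (C - A) \<noteq> 0"
  shows "lower_level_between S (diag_index A B C)"
  unfolding lower_level_between_def
proof (intro ballI impI)
  fix x y assume "x \<in> S" "y \<in> S" and xy: "x \<noteq> y \<and> diag_index A B C x = diag_index A B C y"
  then obtain m where m: "diag_index A B C x = Suc m"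
    using diag_index_in_window[OF \<open>x \<in> S\<close>] less_imp_Suc_add by blast
  have hx: "has_index A B C x (Suc m)" and hy: "has_index A B C y (Suc m)"
    using \<open>x \<in> S\<close> \<open>y \<in> S\<close> xy m mem_S_iff by auto
  obtain w where w: "strictly_between x y w" "w \<in> cut_pts A B C m"
  proof (cases "x < y")
    case True then show thesis using equal_index_separated[OF D0 True hx hy] that
      unfolding strictly_between_def by auto
  next
    case False then have "y < x" using xy by simp
    then show thesis using equal_index_separated[OF D0 _ hy hx] that
      unfolding strictly_between_def by auto
  qed
  then obtain p where "p \<le> m" "has_index A B C w p" unfolding cut_pts_def by auto
  moreover have "a < w" "w < b"
    using w(1) \<open>x \<in> S\<close> \<open>y \<in> S\<close> unfolding S_def strictly_between_def by auto
  moreover have "m < n + c" using \<open>x \<in> S\<close> m mem_S_iff by simp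
  ultimately show "\<exists>w\<in>S. strictly_between x y w \<and> diag_index A B C w < diag_index A B C x"
    using w(1) m diag_index_eq mem_S_iff by (intro bexI[of _ w]) auto
qed

lemma good_triple_good_position:
  assumes "good_triple S (diag_index A B C) u z w"
  shows "good_position A B C u z w (diag_index A B C u) (diag_index A B C z) (diag_index A B C w)"
  unfolding good_position_def
proof (intro conjI allI impI)
  have S: "u \<in> S" "z \<in> S" "w \<in> S" using assms unfolding good_triple_def by auto
  then show "has_index A B C u (diag_index A B C u)" "has_index A B C z (diag_index A B C z)"
    "has_index A B C w (diag_index A B C w)" using mem_S_iff by auto
  show "diag_index A B C u < diag_index A B C z" "diag_index A B C z < diag_index A B C w"
    "strictly_between u z w" using assms unfolding good_triple_def by auto
  fix w' assume w': "strictly_between u z w' \<and> w' \<in> cut_pts A B C (diag_index A B C w)"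
  then obtain p where p: "p \<le> diag_index A B C w" "has_index A B C w' p" unfolding cut_pts_def by auto
  have "a < w'" "w' < b" using w' S unfolding mem_S_iff strictly_between_def by auto
  then have "w' \<in> S" "diag_index A B C w' \<le> diag_index A B C w"
    using p S(3) diag_index_eq[OF p(2)] mem_S_iff by auto
  then show "w' = w" using assms w' unfolding good_triple_def by blast
qed

end

theorem lemma2p1:
  fixes A B C :: complex and n c :: nat and a b :: real and S :: "real set"
  assumes "\<not> collinear {A, B, C}"
    and "c \<ge> 1"
    and "is_interval_of A B C n a b"
    and "S = cut_pts A B C (n + c) \<inter> {a<..<b}"
    and "card S \<ge> 4 + 2 * c"
  shows "\<exists>xp\<in>S. \<exists>xq\<in>S. \<exists>xr\<in>S. \<exists>p q r. good_position A B C xp xq xr p q r"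
proof (rule ccontr)
  assume no_good: "\<not> ?thesis"
  have D0: "cross (B - A) (C - A) \<noteq> 0" using assms(1) collinear_if_cross_eq_0 by blast
  have "finite S" "S \<noteq> {}" using assms(5) card_gt_0_iff[of S] by simp_all
  moreover have "lower_level_between S (diag_index A B C)"
    by (rule cut_pts_lower_level_between[OF assms(3,4) D0])
  moreover have "\<nexists>u z w. good_triple S (diag_index A B C) u z w"
  proof clarify
    fix u z w assume good: "good_triple S (diag_index A B C) u z w"
    then have "u \<in> S" "z \<in> S" "w \<in> S" unfolding good_triple_def by simp_all
    then show False using good_triple_good_position[OF assms(3,4) good] no_good by blast
  qed
  ultimately have "card S < 2 * card (diag_index A B C ` S)"
    by (rule card_lt_if_no_good_triple)
  moreover have "diag_index A B C ` S \<subseteq> {n<..n + c}"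
    using diag_index_in_window[OF assms(3,4)] mem_S_iff[OF assms(3,4)] by auto
  then have "card (diag_index A B C ` S) \<le> c"
    using card_mono[of "{n<..n + c}"] by fastforce
  ultimately show False using assms(5) by linarith
qed

end
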